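(* Let $\mathscr{G}$ be a graph class of asymptotic dimension at most $d$ with $d$-dimensional control function $f$. For every $G\in\mathscr{G}$ with $n$ vertices and every integer $r\ge1$, there exist sets $C_0,C_1,\dots,C_d\subseteq V(G)$ with $C_0\cup\dots\cup C_d=V(G)$ such that (i) for every $i$, every connected component of $G^r[C_i]$ has weak diameter in $G$ at most $f(3r)+2r$, and (ii) for every $i\in\{0,\dots,d\}$, $|C_i|\ge\lfloor n/(d+1)\rfloor$.
   Context: $G^r$ is the graph on $V(G)$ in which two vertices are adjacent iff their distance in $G$ is at most $r$. The weak diameter in $G$ of $Z\subseteq V(G)$ is the maximum $G$-distance between two vertices of $Z$. A class $\mathscr{G}$ has asymptotic dimension at most $d$ with $d$-dimensional control function $f:\mathbb{N}\to\mathbb{N}$ if for every $G\in\mathscr{G}$ and integer $r\ge1$ the vertices of $G$ can be coloured with $d+1$ colours so that any two vertices in the same connected component of the subgraph of $G^r$ induced by one colour class are at distance at most $f(r)$ in $G$. *)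

theory Defs
  imports Main
begin

type_synonym 'a graph = "'a set \<times> ('a \<Rightarrow> 'a \<Rightarrow> bool)"

definition verts :: "'a graph \<Rightarrow> 'a set" where "verts G = fst G"
definition adj :: "'a graph \<Rightarrow> 'a \<Rightarrow> 'a \<Rightarrow> bool" where "adj G = snd G"

definition simple_graph :: "'a graph \<Rightarrow> bool" where
  "simple_graph G \<longleftrightarrow>
     (\<forall>x y. adj G x y \<longrightarrow> x \<in> verts G \<and> y \<in> verts G) \<and>
     (\<forall>x y. adj G x y \<longrightarrow> adj G y x) \<and> (\<forall>x. \<not> adj G x x)"

text \<open>G-distance between x and y is at most k: there is a walk in G from x to y
  with at most k edges (vertex list of length at most k+1).\<close>
definition dist_le :: "'a graph \<Rightarrow> nat \<Rightarrow> 'a \<Rightarrow> 'a \<Rightarrow> bool" where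
  "dist_le G k x y \<longleftrightarrow> (\<exists>p. p \<noteq> [] \<and> hd p = x \<and> last p = y \<and> length p \<le> Suc k \<and>
      set p \<subseteq> verts G \<and> (\<forall>i. Suc i < length p \<longrightarrow> adj G (p ! i) (p ! Suc i)))"

definition graph_power :: "'a graph \<Rightarrow> nat \<Rightarrow> 'a graph" where
  "graph_power G r = (verts G, \<lambda>x y. x \<noteq> y \<and> dist_le G r x y)"

definition same_comp :: "'a graph \<Rightarrow> 'a set \<Rightarrow> 'a \<Rightarrow> 'a \<Rightarrow> bool" where
  "same_comp H C x y \<longleftrightarrow> (\<exists>p. p \<noteq> [] \<and> hd p = x \<and> last p = y \<and>
      set p \<subseteq> C \<inter> verts H \<and> (\<forall>i. Suc i < length p \<longrightarrow> adj H (p ! i) (p ! Suc i)))"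

definition comps_weak_diam_le :: "'a graph \<Rightarrow> nat \<Rightarrow> 'a set \<Rightarrow> nat \<Rightarrow> bool" where
  "comps_weak_diam_le G r C D \<longleftrightarrow>
     (\<forall>x y. same_comp (graph_power G r) C x y \<longrightarrow> dist_le G D x y)"

definition asdim_le :: "'a graph set \<Rightarrow> nat \<Rightarrow> (nat \<Rightarrow> nat) \<Rightarrow> bool" where
  "asdim_le \<G> d f \<longleftrightarrow>
     (\<forall>G\<in>\<G>. \<forall>r::nat. r \<ge> 1 \<longrightarrow>
        (\<exists>c :: 'a \<Rightarrow> nat. (\<forall>v\<in>verts G. c v \<le> d) \<and>
           (\<forall>i\<le>d. comps_weak_diam_le G r {v \<in> verts G. c v = i} (f r))))"

end

theory Submission
  imports Defs
begin

text \<open>Colour G at scale 3r, so that the colour classes A_0, ..., A_d have G^{3r}-components of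
  weak diameter at most f(3r), and let m = n div (d+1). Every vertex of the closed
  r-neighbourhood N of A_i is within distance r of A_i, so along a G^r-walk in N these nearby
  vertices of A_i are consecutively at distance at most 3r: a G^r-component of N stays within
  distance r of one G^{3r}-component of A_i and has weak diameter at most f(3r) + 2r. If N has at
  least m vertices, take C_i = N. Otherwise more than d m vertices lie outside N, so by
  pigeonhole some other class A_j has at least m of them; no G^r-edge joins A_i to these, hence
  every G^r-component of their union with A_i lies in A_i or in A_j. Each C_i contains A_i, so
  the C_i cover V(G).\<close>

lemma dist_le_iff_successively:
  "dist_le G k x y \<longleftrightarrow> (\<exists>p. p \<noteq> [] \<and> hd p = x \<and> last p = y \<and> length p \<le> Suc k \<and>
      set p \<subseteq> verts G \<and> successively (adj G) p)"
  unfolding dist_le_def successively_conv_nth by simp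

lemma same_comp_iff_successively:
  "same_comp H C x y \<longleftrightarrow> (\<exists>p. p \<noteq> [] \<and> hd p = x \<and> last p = y \<and>
      set p \<subseteq> C \<inter> verts H \<and> successively (adj H) p)"
  unfolding same_comp_def successively_conv_nth by simp

lemma dist_le_refl: "x \<in> verts G \<Longrightarrow> dist_le G k x x"
  unfolding dist_le_iff_successively by (rule exI[of _ "[x]"]) auto

lemma dist_le_mono: "dist_le G k x y \<Longrightarrow> k \<le> k' \<Longrightarrow> dist_le G k' x y"
  unfolding dist_le_iff_successively by (metis le_trans Suc_le_mono)

lemma dist_le_sym:
  assumes "simple_graph G" "dist_le G k x y"
  shows "dist_le G k y x"
proof -
  from assms(2) obtain p where p: "p \<noteq> []" "hd p = x" "last p = y" "length p \<le> Suc k"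
      "set p \<subseteq> verts G" "successively (adj G) p"
    unfolding dist_le_iff_successively by blast
  have "adj G u v \<Longrightarrow> adj G v u" for u v
    using assms(1) unfolding simple_graph_def by blast
  then have "successively (adj G) (rev p)"
    using p(6) by (simp add: successively_mono)
  then show ?thesis
    unfolding dist_le_iff_successively using p
    by (intro exI[of _ "rev p"]) (auto simp: hd_rev last_rev)
qed

lemma dist_le_trans:
  assumes "dist_le G a x y" "dist_le G b y z"
  shows "dist_le G (a + b) x z"
proof -
  from assms(1) obtain p where p: "p \<noteq> []" "hd p = x" "last p = y" "length p \<le> Suc a"
      "set p \<subseteq> verts G" "successively (adj G) p"
    unfolding dist_le_iff_successively by blast
  from assms(2) obtain w q where q: "hd (w # q) = y" "last (w # q) = z" "length (w # q) \<le> Suc b"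
      "set (w # q) \<subseteq> verts G" "successively (adj G) (w # q)"
    unfolding dist_le_iff_successively by (metis list.exhaust)
  have "successively (adj G) (p @ q)"
    using p q by (auto simp: successively_append_iff successively_Cons)
  moreover have "last (p @ q) = z"
    using p q by (cases q) auto
  ultimately show ?thesis
    unfolding dist_le_iff_successively using p q
    by (intro exI[of _ "p @ q"]) auto
qed

lemma same_comp_refl: "x \<in> C \<Longrightarrow> x \<in> verts H \<Longrightarrow> same_comp H C x x"
  unfolding same_comp_iff_successively by (rule exI[of _ "[x]"]) auto

lemma same_comp_snoc:
  assumes "same_comp H C x u" "v \<in> C" "v \<in> verts H" "adj H u v"
  shows "same_comp H C x v"
proof -
  from assms(1) obtain p where p: "p \<noteq> []" "hd p = x" "last p = u"
      "set p \<subseteq> C \<inter> verts H" "successively (adj H) p"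
    unfolding same_comp_iff_successively by blast
  show ?thesis
    unfolding same_comp_iff_successively using p assms
    by (intro exI[of _ "p @ [v]"]) (auto simp: successively_append_iff)
qed

lemma same_comp_subset: "same_comp H C x y \<Longrightarrow> C \<subseteq> C' \<Longrightarrow> same_comp H C' x y"
  unfolding same_comp_iff_successively by blast

lemma same_comp_start_mem: "same_comp H C x y \<Longrightarrow> x \<in> C"
  unfolding same_comp_iff_successively by (metis IntD1 hd_in_set subsetD)

lemma same_comp_start_verts: "same_comp H C x y \<Longrightarrow> x \<in> verts H"
  unfolding same_comp_iff_successively by (metis IntD2 hd_in_set subsetD)

lemma same_comp_induct [consumes 1, case_names start step]:
  assumes "same_comp H C x y"
    and "P x"
    and "\<And>u v. P u \<Longrightarrow> u \<in> C \<Longrightarrow> v \<in> C \<Longrightarrow> v \<in> verts H \<Longrightarrow> adj H u v \<Longrightarrow> P v"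
  shows "P y"
proof -
  from assms(1) obtain p where p: "p \<noteq> []" "hd p = x" "last p = y"
      "set p \<subseteq> C \<inter> verts H" "successively (adj H) p"
    unfolding same_comp_iff_successively by blast
  have "P (last p)" if "p \<noteq> []" "hd p = x" "set p \<subseteq> C \<inter> verts H" "successively (adj H) p"
    using that
  proof (induction p rule: rev_induct)
    case Nil
    then show ?case by simp
  next
    case (snoc v p)
    show ?case
    proof (cases "p = []")
      case True
      then show ?thesis using snoc.prems(2) assms(2) by simp
    next
      case False
      have "P (last p)"
        using snoc False by (simp add: successively_append_iff)
      moreover have "last p \<in> C" "v \<in> C" "v \<in> verts H"
        using snoc.prems(3) False by auto
      moreover have "adj H (last p) v"
        using snoc.prems(4) False by (simp add: successively_append_iff)
      ultimately show ?thesis using assms(3) by simp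
    qed
  qed
  then show ?thesis using p by blast
qed

lemma adj_graph_power: "adj (graph_power G r) u v \<longleftrightarrow> u \<noteq> v \<and> dist_le G r u v"
  unfolding graph_power_def adj_def by simp

lemma verts_graph_power [simp]: "verts (graph_power G r) = verts G"
  unfolding graph_power_def verts_def by simp

lemma same_comp_graph_power_mono:
  assumes "same_comp (graph_power G r) C x y" "r \<le> s"
  shows "same_comp (graph_power G s) C x y"
proof -
  have "adj (graph_power G r) u v \<Longrightarrow> adj (graph_power G s) u v" for u v
    using assms(2) by (auto simp: adj_graph_power intro: dist_le_mono)
  then show ?thesis
    using assms(1) unfolding same_comp_iff_successively
    by (auto intro: successively_mono)
qed

lemma comps_weak_diam_le_scale_mono:
  "comps_weak_diam_le G s C D \<Longrightarrow> r \<le> s \<Longrightarrow> comps_weak_diam_le G r C D"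
  unfolding comps_weak_diam_le_def by (metis same_comp_graph_power_mono)

lemma comps_weak_diam_le_subset:
  "comps_weak_diam_le G r C D \<Longrightarrow> C' \<subseteq> C \<Longrightarrow> comps_weak_diam_le G r C' D"
  unfolding comps_weak_diam_le_def by (metis same_comp_subset)

lemma comps_weak_diam_le_mono:
  "comps_weak_diam_le G r C D \<Longrightarrow> D \<le> D' \<Longrightarrow> comps_weak_diam_le G r C D'"
  unfolding comps_weak_diam_le_def by (metis dist_le_mono)

definition nbhd :: "'a graph \<Rightarrow> nat \<Rightarrow> 'a set \<Rightarrow> 'a set" where
  "nbhd G r A = {v \<in> verts G. \<exists>a\<in>A. dist_le G r a v}"

lemma subset_nbhd: "A \<subseteq> verts G \<Longrightarrow> A \<subseteq> nbhd G r A"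
  unfolding nbhd_def by (auto intro: dist_le_refl)

lemma comps_weak_diam_le_nbhd:
  assumes "simple_graph G" "A \<subseteq> verts G" "comps_weak_diam_le G (3 * r) A D"
  shows "comps_weak_diam_le G r (nbhd G r A) (D + 2 * r)"
  unfolding comps_weak_diam_le_def
proof (intro allI impI)
  fix x y
  assume walk: "same_comp (graph_power G r) (nbhd G r A) x y"
  then obtain a\<^sub>x where a\<^sub>x: "a\<^sub>x \<in> A" "dist_le G r a\<^sub>x x"
    using same_comp_start_mem[OF walk] unfolding nbhd_def by blast
  let ?near = "\<lambda>u. \<exists>a\<in>A. dist_le G r a u \<and> same_comp (graph_power G (3 * r)) A a\<^sub>x a"
  from walk have "?near y"
  proof (induction rule: same_comp_induct)
    case start
    have "same_comp (graph_power G (3 * r)) A a\<^sub>x a\<^sub>x"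
      using a\<^sub>x(1) assms(2) by (intro same_comp_refl) auto
    then show ?case using a\<^sub>x by blast
  next
    case (step u v)
    then obtain a where a: "a \<in> A" "dist_le G r a u" "same_comp (graph_power G (3 * r)) A a\<^sub>x a"
      by blast
    from step obtain b where b: "b \<in> A" "dist_le G r b v"
      unfolding nbhd_def by blast
    from step have "dist_le G r u v"
      by (simp add: adj_graph_power)
    then have "dist_le G (r + r + r) a b"
      using dist_le_trans[OF dist_le_trans[OF a(2)] dist_le_sym[OF assms(1) b(2)]] by blast
    moreover have "r + r + r = 3 * r"
      by simp
    ultimately have "a = b \<or> adj (graph_power G (3 * r)) a b"
      by (simp add: adj_graph_power)
    then have "same_comp (graph_power G (3 * r)) A a\<^sub>x b"
      using a(3) b(1) assms(2) same_comp_snoc[of "graph_power G (3 * r)" A a\<^sub>x a b] by auto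
    then show ?case using b by blast
  qed
  then obtain b where b: "dist_le G r b y" "same_comp (graph_power G (3 * r)) A a\<^sub>x b"
    by blast
  have "dist_le G D a\<^sub>x b"
    using assms(3) b(2) unfolding comps_weak_diam_le_def by blast
  then have "dist_le G (r + D + r) x y"
    using dist_le_trans[OF dist_le_trans[OF dist_le_sym[OF assms(1) a\<^sub>x(2)]] b(1)] by blast
  then show "dist_le G (D + 2 * r) x y"
    by (simp add: add.commute add.left_commute mult_2)
qed

lemma same_comp_Un_separated:
  assumes "same_comp H (A \<union> B) x y" "x \<in> A"
    and "\<And>a b. a \<in> A \<Longrightarrow> b \<in> B \<Longrightarrow> \<not> adj H a b"
  shows "same_comp H A x y"
proof -
  from assms(1) have "y \<in> A \<and> same_comp H A x y"
  proof (induction rule: same_comp_induct)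
    case start
    show ?case
      using assms(2) same_comp_start_verts[OF assms(1)] by (simp add: same_comp_refl)
  next
    case (step u v)
    then show ?case using assms(3) by (blast intro: same_comp_snoc)
  qed
  then show ?thesis by blast
qed

lemma comps_weak_diam_le_Un_far:
  assumes "simple_graph G" "comps_weak_diam_le G r A D" "comps_weak_diam_le G r B D"
    and "\<And>a b. a \<in> A \<Longrightarrow> b \<in> B \<Longrightarrow> \<not> dist_le G r a b"
  shows "comps_weak_diam_le G r (A \<union> B) D"
  unfolding comps_weak_diam_le_def
proof (intro allI impI)
  fix x y
  assume walk: "same_comp (graph_power G r) (A \<union> B) x y"
  have AB: "\<not> adj (graph_power G r) a b" and BA: "\<not> adj (graph_power G r) b a"
    if "a \<in> A" "b \<in> B" for a b
    using assms(4)[OF that] dist_le_sym[OF assms(1)] by (auto simp: adj_graph_power)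
  consider "x \<in> A" | "x \<in> B"
    using same_comp_start_mem[OF walk] by blast
  then show "dist_le G D x y"
  proof cases
    case 1
    from walk 1 AB have "same_comp (graph_power G r) A x y"
      by (rule same_comp_Un_separated)
    then show ?thesis using assms(2) unfolding comps_weak_diam_le_def by blast
  next
    case 2
    from walk have "same_comp (graph_power G r) (B \<union> A) x y"
      by (simp add: Un_commute)
    from this 2 BA have "same_comp (graph_power G r) B x y"
      by (rule same_comp_Un_separated)
    then show ?thesis using assms(3) unfolding comps_weak_diam_le_def by blast
  qed
qed

lemma comps_weak_diam_le_Un_Diff_nbhd:
  assumes "simple_graph G" "comps_weak_diam_le G r A D" "comps_weak_diam_le G r B D"
    and "B \<subseteq> verts G"
  shows "comps_weak_diam_le G r (A \<union> (B - nbhd G r A)) D"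
proof (rule comps_weak_diam_le_Un_far[OF assms(1,2)])
  show "comps_weak_diam_le G r (B - nbhd G r A) D"
    using assms(3) Diff_subset by (rule comps_weak_diam_le_subset)
  show "\<not> dist_le G r a b" if "a \<in> A" "b \<in> B - nbhd G r A" for a b
    using that assms(4) unfolding nbhd_def by blast
qed

lemma pigeonhole_card_Int:
  assumes "finite J" "finite R" "R \<subseteq> (\<Union>j\<in>J. S j)" "card J * m < card R"
  shows "\<exists>j\<in>J. m < card (S j \<inter> R)"
proof (rule ccontr)
  assume small: "\<not> ?thesis"
  have "card R \<le> card (\<Union>j\<in>J. S j \<inter> R)"
    using assms(2,3) by (intro card_mono) auto
  also have "\<dots> \<le> (\<Sum>j\<in>J. card (S j \<inter> R))"
    by (rule card_UN_le[OF assms(1)])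
  also have "\<dots> \<le> card J * m"
    using small sum_bounded_above[of J "\<lambda>j. card (S j \<inter> R)" m] by (simp add: not_less)
  finally show False using assms(4) by simp
qed

lemma colour_class_large_outside:
  assumes "finite V" "\<forall>v\<in>V. c v \<le> d" "(d + 1) * m \<le> card V" "i \<le> d"
    and "{v \<in> V. c v = i} \<subseteq> N" "N \<subseteq> V" "card N < m"
  obtains j where "j \<le> d" "j \<noteq> i" "m < card ({v \<in> V. c v = j} - N)"
proof -
  have "V - N \<subseteq> (\<Union>j\<in>{..d} - {i}. {v \<in> V. c v = j})"
  proof
    fix v
    assume v: "v \<in> V - N"
    then have "c v \<in> {..d} - {i}"
      using assms(2,5) by auto
    then show "v \<in> (\<Union>j\<in>{..d} - {i}. {v \<in> V. c v = j})"
      using v by blast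
  qed
  moreover have "card ({..d} - {i}) * m < card (V - N)"
  proof -
    have "card (V - N) = card V - card N"
      using finite_subset[OF assms(6,1)] assms(6) by (rule card_Diff_subset)
    moreover have "card N \<le> card V"
      using card_mono[OF assms(1,6)] .
    ultimately show ?thesis
      using assms(3,4,7) by (simp add: algebra_simps)
  qed
  ultimately have "\<exists>j\<in>{..d} - {i}. m < card ({v \<in> V. c v = j} \<inter> (V - N))"
    using assms(1) by (intro pigeonhole_card_Int) auto
  then obtain j where "j \<in> {..d} - {i}" "m < card ({v \<in> V. c v = j} \<inter> (V - N))"
    by blast
  moreover have "{v \<in> V. c v = j} \<inter> (V - N) = {v \<in> V. c v = j} - N"
    by blast
  ultimately show ?thesis
    by (intro that) auto
qed

lemma large_set_containing_colour_class:
  assumes "simple_graph G" "finite (verts G)"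
    and "\<forall>v\<in>verts G. c v \<le> d"
    and "\<forall>j\<le>d. comps_weak_diam_le G (3 * r) {v \<in> verts G. c v = j} D"
    and "(d + 1) * m \<le> card (verts G)" "i \<le> d"
  obtains C where "{v \<in> verts G. c v = i} \<subseteq> C" "C \<subseteq> verts G"
    "comps_weak_diam_le G r C (D + 2 * r)" "m \<le> card C"
proof -
  define A where "A j = {v \<in> verts G. c v = j}" for j
  define N where "N = nbhd G r (A i)"
  have A_verts: "A j \<subseteq> verts G" for j
    unfolding A_def by blast
  have A_good: "comps_weak_diam_le G (3 * r) (A j) D" if "j \<le> d" for j
    using assms(4) that unfolding A_def by blast
  have N_verts: "N \<subseteq> verts G"
    unfolding N_def nbhd_def by blast
  have A_N: "A i \<subseteq> N"
    unfolding N_def by (rule subset_nbhd[OF A_verts])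
  show ?thesis
  proof (cases "m \<le> card N")
    case True
    moreover have "comps_weak_diam_le G r N (D + 2 * r)"
      unfolding N_def using assms(1) A_verts A_good[OF assms(6)] by (rule comps_weak_diam_le_nbhd)
    ultimately show ?thesis
      using that[of N] A_N N_verts unfolding A_def by blast
  next
    case False
    then have "card N < m"
      by simp
    then obtain j where j: "j \<le> d" "m < card (A j - N)"
      unfolding A_def by (rule colour_class_large_outside[OF assms(2,3,5,6) A_N[unfolded A_def] N_verts])
    have "comps_weak_diam_le G r (A k) D" if "k \<le> d" for k
      using A_good[OF that] by (rule comps_weak_diam_le_scale_mono) simp
    then have "comps_weak_diam_le G r (A i \<union> (A j - N)) D"
      unfolding N_def using assms(1,6) j(1) A_verts by (intro comps_weak_diam_le_Un_Diff_nbhd)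
    then have "comps_weak_diam_le G r (A i \<union> (A j - N)) (D + 2 * r)"
      by (rule comps_weak_diam_le_mono) simp
    moreover have "card (A j - N) \<le> card (A i \<union> (A j - N))"
      using assms(2) A_verts by (intro card_mono) (auto intro: finite_subset)
    moreover have "{v \<in> verts G. c v = i} \<subseteq> A i \<union> (A j - N)" "A i \<union> (A j - N) \<subseteq> verts G"
      using A_verts unfolding A_def by auto
    ultimately show ?thesis
      using that j(2) by simp
  qed
qed

theorem mainTheorem13:
  fixes \<G> :: "'a graph set" and d :: nat and f :: "nat \<Rightarrow> nat"
    and G :: "'a graph" and n r :: nat
  assumes "asdim_le \<G> d f"
    and "G \<in> \<G>" and "simple_graph G" and "finite (verts G)" and "card (verts G) = n"
    and "r \<ge> 1"
  shows "\<exists>C :: nat \<Rightarrow> 'a set.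
           (\<forall>i\<le>d. C i \<subseteq> verts G) \<and> (\<Union>i\<le>d. C i) = verts G \<and>
           (\<forall>i\<le>d. comps_weak_diam_le G r (C i) (f (3 * r) + 2 * r)) \<and>
           (\<forall>i\<le>d. card (C i) \<ge> n div (d + 1))"
proof -
  have "3 * r \<ge> 1"
    using assms(6) by simp
  then obtain c :: "'a \<Rightarrow> nat" where c: "\<forall>v\<in>verts G. c v \<le> d"
      "\<forall>i\<le>d. comps_weak_diam_le G (3 * r) {v \<in> verts G. c v = i} (f (3 * r))"
    using assms(1,2) unfolding asdim_le_def by blast
  have size: "(d + 1) * (n div (d + 1)) \<le> card (verts G)"
    unfolding assms(5) by (rule times_div_less_eq_dividend)
  have "\<exists>C. {v \<in> verts G. c v = i} \<subseteq> C \<and> C \<subseteq> verts G \<and>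
      comps_weak_diam_le G r C (f (3 * r) + 2 * r) \<and> n div (d + 1) \<le> card C" if "i \<le> d" for i
    by (rule large_set_containing_colour_class[OF assms(3,4) c size that]) blast
  then obtain C where C: "\<forall>i\<le>d. {v \<in> verts G. c v = i} \<subseteq> C i \<and> C i \<subseteq> verts G \<and>
      comps_weak_diam_le G r (C i) (f (3 * r) + 2 * r) \<and> n div (d + 1) \<le> card (C i)"
    by metis
  have "(\<Union>i\<le>d. C i) = verts G"
    using C c(1) by blast
  then show ?thesis
    using C by blast
qed

end
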